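(* Let the labels $\{1,\dots,k\}$ be partitioned into $b\ge2$ blocks of sizes $s_1,\dots,s_b$, let $L_{01,b}(i,j)=[i\text{ and }j\text{ are not in the same block}]$ with quadratic surrogate $\Phi_{quad}(f,y)=\frac1{2k}\|f+L_{01,b}(:,y)\|_2^2$, and let the scores be constrained to the subspace $\mathcal{F}_{01,b}=\mathrm{span}(L_{01,b})$ (the score vectors constant on each block). Then $$H_{\Phi_{quad},L_{01,b},\mathcal{F}_{01,b}}(\varepsilon)=\frac{\varepsilon^2}{4k}\min_{v\ne u}\frac{2s_vs_u}{s_v+s_u},\qquad0\le\varepsilon\le1.$$ In particular, if all blocks have the same size, $H_{\Phi_{quad},L_{01,b},\mathcal{F}_{01,b}}(\varepsilon)=\frac{\varepsilon^2}{4b}$.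
   Context: $\mathrm{span}(L)$ is the column space. $\mathrm{pred}(f)$ is the smallest index maximizing $f_c$. For $q\in\Delta_k$: $\ell(f,q)=\sum_cq_cL(\mathrm{pred}(f),c)$, $\phi(f,q)=\sum_cq_c\Phi(f,c)$, $\delta\ell(f,q)=\ell(f,q)-\inf_{\hat f\in\mathcal{F}}\ell(\hat f,q)$, $\delta\phi(f,q)=\phi(f,q)-\inf_{\hat f\in\mathcal{F}}\phi(\hat f,q)$; calibration function $H_{\Phi,L,\mathcal{F}}(\varepsilon)=\inf\{\delta\phi(f,q):f\in\mathcal{F},q\in\Delta_k,\delta\ell(f,q)\ge\varepsilon\}$ ($+\infty$ if empty). *)

theory Defs
  imports Complex_Main "HOL-Library.Extended_Real"
begin

text \<open>Labels are 0,...,k-1 (0-based). Score vectors are functions nat => real;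
  only the values at indices < k matter.\<close>

definition simplex :: "nat \<Rightarrow> (nat \<Rightarrow> real) set" where
  "simplex k = {q. (\<forall>c<k. q c \<ge> 0) \<and> (\<Sum>c<k. q c) = 1}"

definition pred :: "nat \<Rightarrow> (nat \<Rightarrow> real) \<Rightarrow> nat" where
  "pred k f = (LEAST c. c < k \<and> (\<forall>c'<k. f c' \<le> f c))"

definition cond_loss :: "nat \<Rightarrow> (nat \<Rightarrow> nat \<Rightarrow> real) \<Rightarrow> (nat \<Rightarrow> real) \<Rightarrow> (nat \<Rightarrow> real) \<Rightarrow> real" where
  "cond_loss k L f q = (\<Sum>c<k. q c * L (pred k f) c)"

definition cond_surr :: "nat \<Rightarrow> ((nat \<Rightarrow> real) \<Rightarrow> nat \<Rightarrow> real) \<Rightarrow> (nat \<Rightarrow> real) \<Rightarrow> (nat \<Rightarrow> real) \<Rightarrow> real" where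
  "cond_surr k Phi f q = (\<Sum>c<k. q c * Phi f c)"

definition excess_loss where
  "excess_loss k L F f q = cond_loss k L f q - (INF g\<in>F. cond_loss k L g q)"

definition excess_surr where
  "excess_surr k Phi F f q = cond_surr k Phi f q - (INF g\<in>F. cond_surr k Phi g q)"

text \<open>Calibration function; the infimum of the empty set in ereal is +infinity.\<close>
definition calib :: "nat \<Rightarrow> ((nat \<Rightarrow> real) \<Rightarrow> nat \<Rightarrow> real) \<Rightarrow> (nat \<Rightarrow> nat \<Rightarrow> real)
    \<Rightarrow> (nat \<Rightarrow> real) set \<Rightarrow> real \<Rightarrow> ereal" where
  "calib k Phi L F \<epsilon> = (INF p \<in> {(f, q). f \<in> F \<and> q \<in> simplex k \<and> excess_loss k L F f q \<ge> \<epsilon>}.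
       ereal (excess_surr k Phi F (fst p) (snd p)))"

definition col_span :: "nat \<Rightarrow> (nat \<Rightarrow> nat \<Rightarrow> real) \<Rightarrow> (nat \<Rightarrow> real) set" where
  "col_span k L = {f. \<exists>\<alpha>. f = (\<lambda>i. if i < k then (\<Sum>j<k. \<alpha> j * L i j) else 0)}"

text \<open>Block 0-1 loss: blk maps each label to its block.\<close>
definition L01b :: "(nat \<Rightarrow> nat) \<Rightarrow> nat \<Rightarrow> nat \<Rightarrow> real" where
  "L01b blk i j = (if blk i = blk j then 0 else 1)"

definition Phi_quad :: "nat \<Rightarrow> (nat \<Rightarrow> nat \<Rightarrow> real) \<Rightarrow> (nat \<Rightarrow> real) \<Rightarrow> nat \<Rightarrow> real" where
  "Phi_quad k L f y = 1 / (2 * real k) * (\<Sum>i<k. (f i + L i y)\<^sup>2)"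

definition block_size :: "nat \<Rightarrow> (nat \<Rightarrow> nat) \<Rightarrow> nat \<Rightarrow> nat" where
  "block_size k blk v = card {i. i < k \<and> blk i = v}"

end

theory Submission
  imports Defs
begin

text \<open>
  Write \<open>Q u\<close> for the \<open>q\<close>-mass of block \<open>u\<close> and \<open>s u\<close> for its size. Up to a constant, the
  conditional surrogate is \<open>(\<Sum>i. (f i + 1 - Q (blk i))\<^sup>2) / 2k\<close>, whose minimiser
  \<open>f i = Q (blk i) - 1\<close> is constant on blocks; so for block-constant scores \<open>f i = G (blk i)\<close>
  the excess surrogate is \<open>(\<Sum>u. s u * h u\<^sup>2) / 2k\<close> with residuals \<open>h u = G u + 1 - Q u\<close>.
  An excess loss \<open>\<ge> \<epsilon>\<close> means that the predicted block \<open>w\<close> lags some block \<open>v\<close> by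
  \<open>Q v - Q w \<ge> \<epsilon>\<close>; as \<open>G w \<ge> G v\<close>, this forces \<open>h w - h v \<ge> \<epsilon>\<close>, and then
  \<open>s v * h v\<^sup>2 + s w * h w\<^sup>2 \<ge> \<epsilon>\<^sup>2 s v s w / (s v + s w)\<close> by Cauchy-Schwarz.
  Equality is attained by a \<open>q\<close> supported on two blocks and a tie between their scores.
\<close>

definition block_mass :: "nat \<Rightarrow> (nat \<Rightarrow> nat) \<Rightarrow> (nat \<Rightarrow> real) \<Rightarrow> nat \<Rightarrow> real" where
  "block_mass k blk q u = (\<Sum>c<k. if blk c = u then q c else 0)"

definition harmonic_mean :: "real \<Rightarrow> real \<Rightarrow> real" where
  "harmonic_mean x y = 2 * x * y / (x + y)"

definition min_block_harmonic_mean :: "nat \<Rightarrow> (nat \<Rightarrow> nat) \<Rightarrow> nat \<Rightarrow> real" where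
  "min_block_harmonic_mean k blk b =
     Min {harmonic_mean (real (block_size k blk v)) (real (block_size k blk u)) | v u. v < b \<and> u < b \<and> v \<noteq> u}"

lemma harmonic_mean_commute: "harmonic_mean x y = harmonic_mean y x"
  by (simp add: harmonic_mean_def algebra_simps)

lemma weighted_sq_sum_ge_harmonic_mean:
  fixes x y a c e :: real
  assumes "0 < x" "0 < y" "e \<le> c - a" "0 \<le> e"
  shows "e\<^sup>2 / 2 * harmonic_mean x y \<le> x * a\<^sup>2 + y * c\<^sup>2"
proof -
  have "(x + y) * (x * a\<^sup>2 + y * c\<^sup>2) = x * y * (c - a)\<^sup>2 + (x * a + y * c)\<^sup>2"
    by (simp add: power2_eq_square algebra_simps)
  moreover have "e\<^sup>2 \<le> (c - a)\<^sup>2"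
    using assms(3,4) by (simp add: power_mono)
  ultimately have "x * y * e\<^sup>2 \<le> (x + y) * (x * a\<^sup>2 + y * c\<^sup>2)"
    using assms(1,2) by (smt (verit) mult_left_mono mult_pos_pos zero_le_power2)
  then show ?thesis
    using assms(1,2) by (simp add: harmonic_mean_def field_simps)
qed

lemma weighted_sq_sum_eq_harmonic_mean:
  fixes x y e :: real
  assumes "0 < x + y"
  shows "x * (e * y / (x + y))\<^sup>2 + y * (e * x / (x + y))\<^sup>2 = e\<^sup>2 / 2 * harmonic_mean x y"
proof -
  have "x * (e * y / (x + y))\<^sup>2 + y * (e * x / (x + y))\<^sup>2 = e\<^sup>2 * x * y * (x + y) / (x + y)\<^sup>2"
    by (simp add: power_divide add_divide_distrib[symmetric] power2_eq_square algebra_simps)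
  then show ?thesis
    using assms by (simp add: harmonic_mean_def power2_eq_square)
qed

lemma pred_is_argmax:
  assumes "0 < k"
  shows "pred k f < k" "\<forall>c<k. f c \<le> f (pred k f)"
proof -
  obtain c where "c < k" "f c = Max (f ` {..<k})"
  proof -
    have "Max (f ` {..<k}) \<in> f ` {..<k}"
      using assms by (intro Max_in) auto
    then show ?thesis using that by auto
  qed
  then have "c < k \<and> (\<forall>c'<k. f c' \<le> f c)" by auto
  then have "pred k f < k \<and> (\<forall>c'<k. f c' \<le> f (pred k f))"
    unfolding pred_def by (rule LeastI)
  then show "pred k f < k" "\<forall>c<k. f c \<le> f (pred k f)" by auto
qed

lemma pred_eq_Least_argmax:
  assumes "\<And>c. c < k \<Longrightarrow> (\<forall>c'<k. f c' \<le> f c) \<longleftrightarrow> P c"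
  shows "pred k f = (LEAST c. c < k \<and> P c)"
  unfolding pred_def by (metis assms)

lemma cond_loss_L01b:
  assumes "q \<in> simplex k" "0 < k"
  shows "cond_loss k (L01b blk) f q = 1 - block_mass k blk q (blk (pred k f))"
proof -
  have "cond_loss k (L01b blk) f q = (\<Sum>c<k. q c - (if blk c = blk (pred k f) then q c else 0))"
    unfolding cond_loss_def by (rule sum.cong) (auto simp: L01b_def)
  then show ?thesis
    using assms(1) by (simp add: sum_subtractf simplex_def block_mass_def)
qed

lemma cond_loss_L01b_nonneg: "q \<in> simplex k \<Longrightarrow> 0 \<le> cond_loss k (L01b blk) f q"
  unfolding cond_loss_def simplex_def L01b_def by (auto intro!: sum_nonneg)

lemma cond_surr_Phi_quad_L01b:
  fixes blk :: "nat \<Rightarrow> nat"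
  assumes "q \<in> simplex k"
  defines "P i \<equiv> block_mass k blk q (blk i)"
  shows "cond_surr k (Phi_quad k (L01b blk)) f q =
           ((\<Sum>i<k. (f i + 1 - P i)\<^sup>2) + (\<Sum>i<k. P i - (P i)\<^sup>2)) / (2 * real k)"
proof -
  have "(\<Sum>c<k. q c * (f i + L01b blk i c)\<^sup>2) = (f i + 1 - P i)\<^sup>2 + (P i - (P i)\<^sup>2)" for i
  proof -
    have "(\<Sum>c<k. q c * (f i + L01b blk i c)\<^sup>2)
        = (\<Sum>c<k. q c) * (f i + 1)\<^sup>2 - P i * (2 * f i + 1)"
      unfolding P_def block_mass_def sum_distrib_right sum_subtractf[symmetric]
      by (rule sum.cong) (auto simp: L01b_def power2_eq_square algebra_simps)
    then show ?thesis
      using assms(1) by (simp add: simplex_def power2_eq_square algebra_simps)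
  qed
  then have "(\<Sum>c<k. \<Sum>i<k. q c * (f i + L01b blk i c)\<^sup>2)
           = (\<Sum>i<k. (f i + 1 - P i)\<^sup>2) + (\<Sum>i<k. P i - (P i)\<^sup>2)"
    by (simp add: sum.swap[of _ "{..<k}"] sum.distrib)
  then show ?thesis
    unfolding cond_surr_def Phi_quad_def
    by (simp add: sum_distrib_left mult_ac flip: sum_divide_distrib)
qed

lemma col_span_L01b_block_const:
  assumes "f \<in> col_span k (L01b blk)" "i < k" "j < k" "blk i = blk j"
  shows "f i = f j"
  using assms unfolding col_span_def L01b_def by auto

lemma col_span_L01b_factors:
  assumes "f \<in> col_span k (L01b blk)"
  obtains G where "\<forall>i<k. f i = G (blk i)"
proof
  show "\<forall>i<k. f i = (\<lambda>u. f (SOME j. j < k \<and> blk j = u)) (blk i)"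
  proof (intro allI impI)
    fix i assume "i < k"
    then have "(SOME j. j < k \<and> blk j = blk i) < k \<and> blk (SOME j. j < k \<and> blk j = blk i) = blk i"
      by (intro someI) auto
    then show "f i = (\<lambda>u. f (SOME j. j < k \<and> blk j = u)) (blk i)"
      using col_span_L01b_block_const[OF assms \<open>i < k\<close>] by auto
  qed
qed

lemma two_point_simplex:
  assumes "r < k" "r' < k" "blk r \<noteq> blk r'" "0 \<le> \<epsilon>" "\<epsilon> \<le> 1"
  defines "q \<equiv> \<lambda>c. (if c = r then (1 + \<epsilon>) / 2 else 0) + (if c = r' then (1 - \<epsilon>) / 2 else 0)"
  shows "q \<in> simplex k"
    and "block_mass k blk q u = (if u = blk r then (1 + \<epsilon>) / 2 else 0) + (if u = blk r' then (1 - \<epsilon>) / 2 else 0)"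
proof -
  have "r \<noteq> r'"
    using assms(3) by auto
  then show "q \<in> simplex k"
    unfolding simplex_def q_def using assms(1,2,4,5) by (auto simp: sum.distrib field_simps)
  have "block_mass k blk q u
      = (\<Sum>c<k. (if c = r then (if u = blk r then (1 + \<epsilon>) / 2 else 0) else 0)
               + (if c = r' then (if u = blk r' then (1 - \<epsilon>) / 2 else 0) else 0))"
    unfolding block_mass_def q_def by (rule sum.cong) auto
  then show "block_mass k blk q u = (if u = blk r then (1 + \<epsilon>) / 2 else 0) + (if u = blk r' then (1 - \<epsilon>) / 2 else 0)"
    using assms(1,2) \<open>r \<noteq> r'\<close> by (simp add: sum.distrib)
qed

lemma excess_loss_L01b_ge:
  assumes "g \<in> F" "q \<in> simplex k"
  shows "cond_loss k (L01b blk) f q - cond_loss k (L01b blk) g q \<le> excess_loss k (L01b blk) F f q"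
proof -
  have "(INF g\<in>F. cond_loss k (L01b blk) g q) \<le> cond_loss k (L01b blk) g q"
    using assms cond_loss_L01b_nonneg[OF assms(2)] by (intro cINF_lower) (auto simp: bdd_below_def)
  then show ?thesis
    unfolding excess_loss_def by simp
qed

lemma calib_eqI:
  assumes "\<And>f q. f \<in> F \<Longrightarrow> q \<in> simplex k \<Longrightarrow> \<epsilon> \<le> excess_loss k L F f q \<Longrightarrow> c \<le> excess_surr k Phi F f q"
    and "f \<in> F" "q \<in> simplex k" "\<epsilon> \<le> excess_loss k L F f q" "excess_surr k Phi F f q = c"
  shows "calib k Phi L F \<epsilon> = ereal c"
  unfolding calib_def
proof (rule antisym)
  show "(INF p\<in>{(f, q). f \<in> F \<and> q \<in> simplex k \<and> \<epsilon> \<le> excess_loss k L F f q}.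
          ereal (excess_surr k Phi F (fst p) (snd p))) \<le> ereal c"
    using assms(2-5) by (intro INF_lower2[of "(f, q)"]) auto
  show "ereal c \<le> (INF p\<in>{(f, q). f \<in> F \<and> q \<in> simplex k \<and> \<epsilon> \<le> excess_loss k L F f q}.
          ereal (excess_surr k Phi F (fst p) (snd p)))"
    using assms(1) by (intro INF_greatest) auto
qed

locale block_partition =
  fixes k b :: nat and blk :: "nat \<Rightarrow> nat"
  assumes two_le_b: "2 \<le> b"
    and blk_lt: "\<forall>i<k. blk i < b"
    and blk_onto: "\<forall>v<b. \<exists>i<k. blk i = v"
begin

abbreviation "F01b \<equiv> col_span k (L01b blk)"

abbreviation "bsize v \<equiv> real (block_size k blk v)"

lemma k_pos: "0 < k"
  using two_le_b blk_onto by force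

lemma bsize_pos: "v < b \<Longrightarrow> 0 < bsize v"
  using blk_onto unfolding block_size_def by (auto simp: card_gt_0_iff)

lemma sum_over_blocks: "(\<Sum>i<k. \<phi> (blk i)) = (\<Sum>v<b. bsize v * \<phi> v)"
proof -
  have "(\<Sum>i<k. \<phi> (blk i)) = (\<Sum>v<b. \<Sum>i\<in>{i. i \<in> {..<k} \<and> blk i = v}. \<phi> (blk i))"
    by (rule sum.group[symmetric]) (use blk_lt in auto)
  also have "\<dots> = (\<Sum>v<b. bsize v * \<phi> v)"
  proof (rule sum.cong[OF refl])
    fix v
    have "(\<Sum>i\<in>{i. i \<in> {..<k} \<and> blk i = v}. \<phi> (blk i)) = (\<Sum>i\<in>{i. i < k \<and> blk i = v}. \<phi> v)"
      by (rule sum.cong) auto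
    then show "(\<Sum>i\<in>{i. i \<in> {..<k} \<and> blk i = v}. \<phi> (blk i)) = bsize v * \<phi> v"
      by (simp add: block_size_def)
  qed
  finally show ?thesis .
qed

lemma block_fun_in_F01b: "(\<lambda>i. if i < k then G (blk i) else 0) \<in> F01b"
proof -
  \<comment> \<open>On blocks, the loss matrix is all-ones minus identity, which is invertible for \<open>b \<ge> 2\<close>:
      \<open>\<beta>\<close> solves \<open>\<Sum>v\<noteq>u. \<beta> v = G u\<close>.\<close>
  define \<beta> where "\<beta> u = (\<Sum>v<b. G v) / (real b - 1) - G u" for u
  have "(\<Sum>v<b. \<beta> v) = real b * ((\<Sum>v<b. G v) / (real b - 1)) - (\<Sum>v<b. G v)"
    by (simp add: \<beta>_def sum_subtractf)
  then have sum_\<beta>: "(\<Sum>v<b. \<beta> v) = (\<Sum>v<b. G v) / (real b - 1)"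
    using two_le_b by (simp add: field_simps)
  have "(\<Sum>j<k. \<beta> (blk j) / bsize (blk j) * L01b blk i j) = G (blk i)" if "i < k" for i
  proof -
    have "(\<Sum>j<k. \<beta> (blk j) / bsize (blk j) * L01b blk i j)
        = (\<Sum>v<b. bsize v * (\<beta> v / bsize v * (if blk i = v then 0 else 1)))"
      unfolding L01b_def by (rule sum_over_blocks)
    also have "\<dots> = (\<Sum>v<b. \<beta> v - (if v = blk i then \<beta> v else 0))"
      using bsize_pos by (intro sum.cong) auto
    also have "\<dots> = (\<Sum>v<b. \<beta> v) - \<beta> (blk i)"
      using blk_lt that by (simp add: sum_subtractf)
    also have "\<dots> = G (blk i)"
      unfolding sum_\<beta> by (simp add: \<beta>_def)
    finally show ?thesis .
  qed
  then show ?thesis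
    unfolding col_span_def by (intro CollectI exI[of _ "\<lambda>j. \<beta> (blk j) / bsize (blk j)"]) auto
qed

lemma excess_surr_F01b:
  assumes "q \<in> simplex k"
  shows "excess_surr k (Phi_quad k (L01b blk)) F01b f q
           = (\<Sum>i<k. (f i + 1 - block_mass k blk q (blk i))\<^sup>2) / (2 * real k)"
proof -
  define C where "C = (\<Sum>i<k. block_mass k blk q (blk i) - (block_mass k blk q (blk i))\<^sup>2) / (2 * real k)"
  have surr: "cond_surr k (Phi_quad k (L01b blk)) g q
                = (\<Sum>i<k. (g i + 1 - block_mass k blk q (blk i))\<^sup>2) / (2 * real k) + C" for g
    unfolding cond_surr_Phi_quad_L01b[OF assms] C_def by (simp add: add_divide_distrib)
  have surr_ge: "C \<le> cond_surr k (Phi_quad k (L01b blk)) g q" for g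
    unfolding surr by (auto intro!: divide_nonneg_nonneg sum_nonneg)
  define g\<^sub>0 where "g\<^sub>0 = (\<lambda>i. if i < k then block_mass k blk q (blk i) - 1 else 0)"
  have "g\<^sub>0 \<in> F01b"
    unfolding g\<^sub>0_def by (rule block_fun_in_F01b)
  moreover have "cond_surr k (Phi_quad k (L01b blk)) g\<^sub>0 q = C"
    unfolding surr by (simp add: g\<^sub>0_def)
  ultimately have "(INF g\<in>F01b. cond_surr k (Phi_quad k (L01b blk)) g q) = C"
    using surr_ge by (intro antisym cINF_lower2 cINF_greatest) (auto simp: bdd_below_def)
  then show ?thesis
    unfolding excess_surr_def surr by simp
qed

lemma excess_surr_block_fun:
  assumes "q \<in> simplex k" "\<forall>i<k. f i = G (blk i)"
  shows "excess_surr k (Phi_quad k (L01b blk)) F01b f q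
           = (\<Sum>u<b. bsize u * (G u + 1 - block_mass k blk q u)\<^sup>2) / (2 * real k)"
proof -
  have "(\<Sum>i<k. (f i + 1 - block_mass k blk q (blk i))\<^sup>2)
      = (\<Sum>i<k. (G (blk i) + 1 - block_mass k blk q (blk i))\<^sup>2)"
    using assms(2) by (intro sum.cong) auto
  then show ?thesis
    unfolding excess_surr_F01b[OF assms(1)]
      sum_over_blocks[of "\<lambda>u. (G u + 1 - block_mass k blk q u)\<^sup>2"] by simp
qed

lemma finite_block_harmonic_means:
  "finite {harmonic_mean (bsize v) (bsize u) | v u. v < b \<and> u < b \<and> v \<noteq> u}"
proof (rule finite_subset)
  show "{harmonic_mean (bsize v) (bsize u) | v u. v < b \<and> u < b \<and> v \<noteq> u}
      \<subseteq> (\<lambda>(v, u). harmonic_mean (bsize v) (bsize u)) ` ({..<b} \<times> {..<b})"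
    by auto
qed auto

lemma min_block_harmonic_mean_le:
  assumes "v < b" "u < b" "v \<noteq> u"
  shows "min_block_harmonic_mean k blk b \<le> harmonic_mean (bsize v) (bsize u)"
  unfolding min_block_harmonic_mean_def
  using finite_block_harmonic_means by (rule Min_le) (use assms in auto)

lemma min_block_harmonic_mean_attained:
  obtains v u where "v < b" "u < b" "v \<noteq> u"
    "min_block_harmonic_mean k blk b = harmonic_mean (bsize v) (bsize u)"
proof -
  let ?S = "{harmonic_mean (bsize v) (bsize u) | v u. v < b \<and> u < b \<and> v \<noteq> u}"
  have "harmonic_mean (bsize 0) (bsize 1) \<in> ?S"
    using two_le_b by (intro CollectI exI[of _ 0] exI[of _ 1]) auto
  then have "Min ?S \<in> ?S"
    using finite_block_harmonic_means by (intro Min_in) auto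
  then show ?thesis
    using that unfolding min_block_harmonic_mean_def by blast
qed

lemma excess_loss_gap:
  assumes "q \<in> simplex k" "F \<noteq> {}" "\<epsilon> \<le> excess_loss k (L01b blk) F f q"
  obtains v where "v < b" "\<epsilon> \<le> block_mass k blk q v - block_mass k blk q (blk (pred k f))"
proof -
  define M where "M = Max (block_mass k blk q ` {..<b})"
  obtain v where v: "v < b" "block_mass k blk q v = M"
  proof -
    have "M \<in> block_mass k blk q ` {..<b}"
      unfolding M_def using two_le_b by (intro Max_in) (auto simp: lessThan_empty_iff)
    then show ?thesis using that by auto
  qed
  have "1 - M \<le> cond_loss k (L01b blk) g q" for g
  proof -
    have "blk (pred k g) < b"
      using pred_is_argmax[OF k_pos] blk_lt by blast
    then show ?thesis
      unfolding cond_loss_L01b[OF assms(1) k_pos] M_def by simp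
  qed
  then have "1 - M \<le> (INF g\<in>F. cond_loss k (L01b blk) g q)"
    using assms(2) by (intro cINF_greatest) auto
  then show ?thesis
    using that[OF v(1)] assms(3) v(2)
    unfolding excess_loss_def cond_loss_L01b[OF assms(1) k_pos] by simp
qed

lemma mass_gap_le_excess_loss:
  assumes "q \<in> simplex k" "v < b"
  shows "block_mass k blk q v - block_mass k blk q (blk (pred k f)) \<le> excess_loss k (L01b blk) F01b f q"
proof -
  define g where "g = (\<lambda>i. if i < k then (if blk i = v then 1 else 0) else (0::real))"
  obtain r where r: "r < k" "blk r = v"
    using blk_onto assms(2) by blast
  have "blk (pred k g) = v"
    using pred_is_argmax[OF k_pos, of g] r by (auto simp: g_def split: if_splits)
  moreover have "g \<in> F01b"
    unfolding g_def by (rule block_fun_in_F01b)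
  ultimately show ?thesis
    using excess_loss_L01b_ge[OF _ assms(1), where f = f and blk = blk]
    unfolding cond_loss_L01b[OF assms(1) k_pos] by fastforce
qed

lemma excess_surr_ge:
  assumes "f \<in> F01b" "q \<in> simplex k" "\<epsilon> \<le> excess_loss k (L01b blk) F01b f q" "0 \<le> \<epsilon>"
  shows "\<epsilon>\<^sup>2 / (4 * real k) * min_block_harmonic_mean k blk b
           \<le> excess_surr k (Phi_quad k (L01b blk)) F01b f q"
proof -
  obtain G where G: "\<forall>i<k. f i = G (blk i)"
    using col_span_L01b_factors[OF assms(1)] by blast
  define h where "h u = G u + 1 - block_mass k blk q u" for u
  define w where "w = blk (pred k f)"
  have w: "w < b"
    using pred_is_argmax[OF k_pos] blk_lt unfolding w_def by blast
  have "F01b \<noteq> {}"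
    using block_fun_in_F01b by blast
  then obtain v where v: "v < b" "\<epsilon> \<le> block_mass k blk q v - block_mass k blk q w"
    using excess_loss_gap[OF assms(2) _ assms(3)] unfolding w_def by blast
  have excess:
    "excess_surr k (Phi_quad k (L01b blk)) F01b f q = (\<Sum>u<b. bsize u * (h u)\<^sup>2) / (2 * real k)"
    unfolding excess_surr_block_fun[OF assms(2) G] h_def ..
  show ?thesis
  proof (cases "v = w")
    case True
    then have "\<epsilon> = 0" using v assms(4) by simp
    then show ?thesis
      unfolding excess by (auto intro!: divide_nonneg_nonneg sum_nonneg)
  next
    case False
    obtain i where i: "i < k" "blk i = v"
      using blk_onto v(1) by blast
    have "G v \<le> G w"
      using pred_is_argmax[OF k_pos, of f] i G unfolding w_def by auto
    then have gap: "\<epsilon> \<le> h w - h v"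
      using v(2) unfolding h_def by linarith
    have "\<epsilon>\<^sup>2 / 2 * min_block_harmonic_mean k blk b \<le> \<epsilon>\<^sup>2 / 2 * harmonic_mean (bsize v) (bsize w)"
      using min_block_harmonic_mean_le[OF v(1) w False] by (simp add: mult_left_mono)
    also have "\<dots> \<le> bsize v * (h v)\<^sup>2 + bsize w * (h w)\<^sup>2"
      by (rule weighted_sq_sum_ge_harmonic_mean[OF bsize_pos[OF v(1)] bsize_pos[OF w] gap assms(4)])
    also have "\<dots> = (\<Sum>u\<in>{v, w}. bsize u * (h u)\<^sup>2)"
      using False by simp
    also have "\<dots> \<le> (\<Sum>u<b. bsize u * (h u)\<^sup>2)"
      using v(1) w by (intro sum_mono2) auto
    finally show ?thesis
      unfolding excess using k_pos by (simp add: field_simps)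
  qed
qed

lemma excess_surr_attained_oriented:
  assumes v: "v < b" and w: "w < b" and "v \<noteq> w" and "0 \<le> \<epsilon>" "\<epsilon> \<le> 1"
    and i\<^sub>0: "(LEAST c. c < k \<and> (blk c = v \<or> blk c = w)) = i\<^sub>0" "i\<^sub>0 < k" "blk i\<^sub>0 = w"
  obtains f q where "f \<in> F01b" "q \<in> simplex k" "\<epsilon> \<le> excess_loss k (L01b blk) F01b f q"
    "excess_surr k (Phi_quad k (L01b blk)) F01b f q
       = \<epsilon>\<^sup>2 / (4 * real k) * harmonic_mean (bsize v) (bsize w)"
proof -
  define T where "T = bsize v + bsize w"
  have T: "0 < T"
    unfolding T_def using bsize_pos[OF v] bsize_pos[OF w] by simp
  \<comment> \<open>Blocks \<open>v\<close> and \<open>w\<close> share the top score \<open>m\<close>, so the tie is broken towards \<open>i\<^sub>0\<close>, which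
      carries the smaller mass \<open>(1 - \<epsilon>) / 2\<close> of \<open>q\<close>: the excess loss is exactly \<open>\<epsilon>\<close>, and the
      residuals \<open>H\<close> are the equality case of \<open>weighted_sq_sum_ge_harmonic_mean\<close>.\<close>
  define H where "H u = (if u = v then - (\<epsilon> * bsize w / T) else if u = w then \<epsilon> * bsize v / T else 0)" for u
  define m where "m = (1 - \<epsilon>) / 2 + \<epsilon> * bsize v / T - 1"
  define G where "G u = (if u = v \<or> u = w then m else -1)" for u
  define f where "f = (\<lambda>i. if i < k then G (blk i) else 0)"
  obtain r where r: "r < k" "blk r = v"
    using blk_onto v by blast
  define q where "q = (\<lambda>c. (if c = r then (1 + \<epsilon>) / 2 else 0) + (if c = i\<^sub>0 then (1 - \<epsilon>) / 2 else 0))"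
  have qS: "q \<in> simplex k"
    and mass: "block_mass k blk q u = (if u = v then (1 + \<epsilon>) / 2 else 0) + (if u = w then (1 - \<epsilon>) / 2 else 0)" for u
    using two_point_simplex[OF r(1) i\<^sub>0(2) _ assms(4,5), of blk] r(2) i\<^sub>0(3) \<open>v \<noteq> w\<close>
    unfolding q_def by auto
  have fF: "f \<in> F01b"
    unfolding f_def by (rule block_fun_in_F01b)
  have fG: "\<forall>i<k. f i = G (blk i)"
    unfolding f_def by simp
  have "-1 < m"
  proof -
    have "0 \<le> \<epsilon> * bsize v / T" "\<epsilon> = 1 \<Longrightarrow> 0 < \<epsilon> * bsize v / T"
      using assms(4) T bsize_pos[OF v] by simp_all
    then show ?thesis
      unfolding m_def using assms(5) by (cases "\<epsilon> < 1") (auto intro: add_pos_nonneg)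
  qed
  then have "pred k f = i\<^sub>0"
    using i\<^sub>0(1) by (subst pred_eq_Least_argmax[where P = "\<lambda>c. blk c = v \<or> blk c = w"])
      (use r i\<^sub>0 in \<open>auto simp: f_def G_def split: if_splits\<close>)
  then have "\<epsilon> \<le> excess_loss k (L01b blk) F01b f q"
    using mass_gap_le_excess_loss[OF qS v, of f] i\<^sub>0(3) \<open>v \<noteq> w\<close> by (simp add: mass field_simps)
  moreover have "excess_surr k (Phi_quad k (L01b blk)) F01b f q
                   = \<epsilon>\<^sup>2 / (4 * real k) * harmonic_mean (bsize v) (bsize w)"
  proof -
    have "\<epsilon> * bsize v / T - \<epsilon> = - (\<epsilon> * bsize w / T)"
      using T unfolding T_def by (simp add: field_simps)
    then have "G u + 1 - block_mass k blk q u = H u" for u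
      unfolding mass H_def G_def m_def using \<open>v \<noteq> w\<close>
      by (auto simp: algebra_simps add_divide_distrib diff_divide_distrib)
    then have "(\<Sum>u<b. bsize u * (G u + 1 - block_mass k blk q u)\<^sup>2) = (\<Sum>u<b. bsize u * (H u)\<^sup>2)"
      by simp
    also have "\<dots> = (\<Sum>u\<in>{v, w}. bsize u * (H u)\<^sup>2)"
      using v w by (intro sum.mono_neutral_right) (auto simp: H_def)
    also have "\<dots> = \<epsilon>\<^sup>2 / 2 * harmonic_mean (bsize v) (bsize w)"
      using weighted_sq_sum_eq_harmonic_mean[of "bsize v" "bsize w" \<epsilon>] T \<open>v \<noteq> w\<close>
      unfolding H_def T_def by simp
    finally show ?thesis
      unfolding excess_surr_block_fun[OF qS fG] using k_pos by (simp add: field_simps)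
  qed
  ultimately show ?thesis
    using that fF qS by blast
qed

lemma excess_surr_attained:
  assumes "v < b" "u < b" "v \<noteq> u" "0 \<le> \<epsilon>" "\<epsilon> \<le> 1"
  obtains f q where "f \<in> F01b" "q \<in> simplex k" "\<epsilon> \<le> excess_loss k (L01b blk) F01b f q"
    "excess_surr k (Phi_quad k (L01b blk)) F01b f q
       = \<epsilon>\<^sup>2 / (4 * real k) * harmonic_mean (bsize v) (bsize u)"
proof -
  define i\<^sub>0 where "i\<^sub>0 = (LEAST c. c < k \<and> (blk c = v \<or> blk c = u))"
  have "i\<^sub>0 < k \<and> (blk i\<^sub>0 = v \<or> blk i\<^sub>0 = u)"
    unfolding i\<^sub>0_def by (rule LeastI_ex) (use blk_onto assms(1) in blast)
  then consider "i\<^sub>0 < k" "blk i\<^sub>0 = u" | "i\<^sub>0 < k" "blk i\<^sub>0 = v"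
    by blast
  then show ?thesis
  proof cases
    case 1
    show ?thesis
      by (rule excess_surr_attained_oriented[OF assms(1-5) i\<^sub>0_def[symmetric] 1], rule that)
  next
    case 2
    have "(LEAST c. c < k \<and> (blk c = u \<or> blk c = v)) = i\<^sub>0"
      unfolding i\<^sub>0_def by (meson disj_commute)
    from excess_surr_attained_oriented[OF assms(2,1) assms(3)[symmetric] assms(4,5) this 2]
    show ?thesis
      using that unfolding harmonic_mean_commute[of "bsize u"] .
  qed
qed

theorem calib_Phi_quad_L01b:
  assumes "0 \<le> \<epsilon>" "\<epsilon> \<le> 1"
  shows "calib k (Phi_quad k (L01b blk)) (L01b blk) F01b \<epsilon>
           = ereal (\<epsilon>\<^sup>2 / (4 * real k) * min_block_harmonic_mean k blk b)"
proof -
  obtain v u where vu: "v < b" "u < b" "v \<noteq> u"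
    and min: "min_block_harmonic_mean k blk b = harmonic_mean (bsize v) (bsize u)"
    by (rule min_block_harmonic_mean_attained)
  obtain f q where "f \<in> F01b" "q \<in> simplex k" "\<epsilon> \<le> excess_loss k (L01b blk) F01b f q"
    "excess_surr k (Phi_quad k (L01b blk)) F01b f q = \<epsilon>\<^sup>2 / (4 * real k) * harmonic_mean (bsize v) (bsize u)"
    using excess_surr_attained[OF vu assms] .
  then show ?thesis
    unfolding min using excess_surr_ge[OF _ _ _ assms(1)] by (intro calib_eqI[of F01b]) (simp_all add: min)
qed

lemma min_block_harmonic_mean_uniform:
  assumes "\<forall>v<b. \<forall>u<b. block_size k blk v = block_size k blk u"
  shows "\<epsilon>\<^sup>2 / (4 * real k) * min_block_harmonic_mean k blk b = \<epsilon>\<^sup>2 / (4 * real b)"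
proof -
  define s where "s = bsize 0"
  have "0 < b"
    using two_le_b by simp
  then have same: "bsize v = s" if "v < b" for v
    unfolding s_def using assms[rule_format, OF that \<open>0 < b\<close>] by simp
  have "0 < s"
    using bsize_pos[OF \<open>0 < b\<close>] unfolding s_def .
  obtain v u where "v < b" "u < b" "min_block_harmonic_mean k blk b = harmonic_mean (bsize v) (bsize u)"
    by (rule min_block_harmonic_mean_attained)
  then have min: "min_block_harmonic_mean k blk b = s"
    using same \<open>0 < s\<close> by (simp add: harmonic_mean_def)
  have "real k = (\<Sum>v<b. bsize v)"
    using sum_over_blocks[of "\<lambda>_. 1"] by simp
  also have "\<dots> = real b * s"
    using same by simp
  finally show ?thesis
    unfolding min using \<open>0 < s\<close> by simp
qed

end

theorem proposition14:
  fixes k b :: nat and blk :: "nat \<Rightarrow> nat" and \<epsilon> :: real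
  assumes "b \<ge> 2"
    and "\<forall>i<k. blk i < b"
    and "\<forall>v<b. \<exists>i<k. blk i = v"
    and "0 \<le> \<epsilon>" and "\<epsilon> \<le> 1"
  shows "calib k (Phi_quad k (L01b blk)) (L01b blk) (col_span k (L01b blk)) \<epsilon>
           = ereal (\<epsilon>\<^sup>2 / (4 * real k) *
               Min {2 * real (block_size k blk v) * real (block_size k blk u)
                      / (real (block_size k blk v) + real (block_size k blk u)) | v u. v < b \<and> u < b \<and> v \<noteq> u})
    \<and> ((\<forall>v<b. \<forall>u<b. block_size k blk v = block_size k blk u) \<longrightarrow>
         calib k (Phi_quad k (L01b blk)) (L01b blk) (col_span k (L01b blk)) \<epsilon> = ereal (\<epsilon>\<^sup>2 / (4 * real b)))"
proof -
  interpret block_partition k b blk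
    using assms(1-3) by unfold_locales
  show ?thesis
    using calib_Phi_quad_L01b[OF assms(4,5)] min_block_harmonic_mean_uniform[of \<epsilon>]
    unfolding min_block_harmonic_mean_def harmonic_mean_def by (metis (no_types, lifting))
qed

end
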